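(* Let $u\in\Lambda$ with $G^{>}_u\neq\emptyset$. Then there exist $a>0$, $b\in(0,1)$ and $c\in\mathbb R$ such that: (1) $\{k\in\mathbb N: u_k>c\}\neq\emptyset$; (2) $u_k\le ab^k+c$ for all $k\in\mathbb N$; (3) $u_{\mathbf K^s_u}=ab^{\mathbf K^s_u}+c$.
   Context: For a real sequence $u=(u_k)_{k\in\mathbb N}$: $\Lambda$ is the set of real sequences with $\sup_n u_n<+\infty$; $G^{>}_u=\{k\in\mathbb N: u_k>\limsup_{n\to\infty}u_n\}$; $\Delta^s_u=\{k\in\mathbb N:\max_{0\le j\le k}u_j>\sup_{j>k}u_j\}$ and $\mathbf K^s_u=\inf\Delta^s_u$ (with $\inf\emptyset=+\infty$). *)

theory Defs
  imports "HOL-Analysis.Analysis" "HOL-Library.Extended_Nat"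
begin

definition Lambda :: "(nat \<Rightarrow> real) set" where
  "Lambda = {u. bdd_above (range u)}"

definition G_gt :: "(nat \<Rightarrow> real) \<Rightarrow> nat set" where
  "G_gt u = {k. ereal (u k) > limsup (\<lambda>n. ereal (u n))}"

definition Delta_s :: "(nat \<Rightarrow> real) \<Rightarrow> nat set" where
  "Delta_s u = {k. ereal (Max (u ` {0..k})) > (SUP j\<in>{k<..}. ereal (u j))}"

text \<open>K^s_u = inf Delta^s_u, with inf of the empty set = infinity (value in enat).\<close>
definition K_s :: "(nat \<Rightarrow> real) \<Rightarrow> enat" where
  "K_s u = (INF k\<in>Delta_s u. enat k)"

end

theory Submission
  imports Defs
begin

text \<open>
  If some \<open>u\<^sub>k\<close> exceeds the limit superior, then the sequence eventually stays below a level
  \<open>t < u\<^sub>k\<close>, and the last index at which \<open>u\<close> attains its maximum over an initial segment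
  reaching past that point lies in \<open>\<Delta>\<^sup>s\<^sub>u\<close>. The least element \<open>K\<close> of \<open>\<Delta>\<^sup>s\<^sub>u\<close> is then a
  record value: \<open>u\<^sub>k \<le> u\<^sub>K\<close> for \<open>k \<le> K\<close>, while \<open>u\<^sub>k \<le> s < u\<^sub>K\<close> for \<open>k > K\<close>. Taking
  \<open>b = 1/2\<close>, \<open>c = s\<close> and \<open>a = (u\<^sub>K - s) 2\<^sup>K\<close> makes \<open>a b\<^sup>k + c\<close> a decreasing majorant touching
  \<open>u\<close> at \<open>K\<close>.
\<close>

lemma Delta_s_iff:
  fixes u :: "nat \<Rightarrow> real"
  shows "i \<in> Delta_s u \<longleftrightarrow> (\<exists>s. s < Max (u ` {0..i}) \<and> (\<forall>j>i. u j \<le> s))"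
proof
  assume "i \<in> Delta_s u"
  then have less: "(SUP j\<in>{i<..}. ereal (u j)) < ereal (Max (u ` {0..i}))"
    unfolding Delta_s_def by simp
  moreover have "ereal (u (Suc i)) \<le> (SUP j\<in>{i<..}. ereal (u j))"
    by (intro SUP_upper) auto
  ultimately obtain s where s: "(SUP j\<in>{i<..}. ereal (u j)) = ereal s"
    by (cases "SUP j\<in>{i<..}. ereal (u j)") auto
  have "u j \<le> s" if "j > i" for j
    using SUP_upper[of j "{i<..}" "\<lambda>j. ereal (u j)"] that s by simp
  then show "\<exists>s. s < Max (u ` {0..i}) \<and> (\<forall>j>i. u j \<le> s)"
    using less s by auto
next
  assume "\<exists>s. s < Max (u ` {0..i}) \<and> (\<forall>j>i. u j \<le> s)"
  then obtain s where s: "s < Max (u ` {0..i})" "\<forall>j>i. u j \<le> s" by blast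
  have "(SUP j\<in>{i<..}. ereal (u j)) \<le> ereal s"
    using s(2) by (auto intro!: SUP_least)
  also have "\<dots> < ereal (Max (u ` {0..i}))" using s(1) by simp
  finally show "i \<in> Delta_s u" unfolding Delta_s_def by simp
qed

lemma last_argmax_in_Delta_s:
  fixes u :: "nat \<Rightarrow> real"
  assumes tail: "\<forall>j>N. u j \<le> t" and t: "t < Max (u ` {0..N})"
  shows "\<exists>m\<le>N. u m = Max (u ` {0..N}) \<and> m \<in> Delta_s u"
proof -
  define M where "M = Max (u ` {0..N})"
  define I where "I = {k. k \<le> N \<and> u k = M}"
  define m where "m = Max I"
  have u_le_M: "u k \<le> M" if "k \<le> N" for k unfolding M_def using that by auto
  have "M \<in> u ` {0..N}" unfolding M_def by (intro Max_in) auto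
  then have "finite I" "I \<noteq> {}" unfolding I_def by auto
  then have "m \<in> I" and after_m: "j \<notin> I" if "m < j" for j
    using that Max_ge[of I j] unfolding m_def by (auto intro: Max_in)
  then have m: "m \<le> N" "u m = M" unfolding I_def by auto
  have u_after_m: "u j < M" if "m < j" "j \<le> N" for j
    using after_m[OF that(1)] u_le_M[OF that(2)] that(2) unfolding I_def by auto
  define s where "s = Max (insert t (u ` {m<..N}))"
  have "s < M" unfolding s_def using t u_after_m by (simp add: M_def[symmetric])
  moreover have "u j \<le> s" if "m < j" for j
  proof (cases "j \<le> N")
    case True
    then show ?thesis unfolding s_def using that by (intro Max_ge) auto
  next
    case False
    then have "u j \<le> t" using tail by simp
    also have "t \<le> s" unfolding s_def by (intro Max_ge) auto
    finally show ?thesis .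
  qed
  moreover have "Max (u ` {0..m}) = M"
  proof (rule antisym)
    show "Max (u ` {0..m}) \<le> M" using m(1) u_le_M by simp
    show "M \<le> Max (u ` {0..m})" using m(2) by (intro Max_ge) auto
  qed
  ultimately have "m \<in> Delta_s u" unfolding Delta_s_iff by auto
  with m show ?thesis unfolding M_def by auto
qed

lemma Delta_s_nonempty:
  fixes u :: "nat \<Rightarrow> real"
  assumes "G_gt u \<noteq> {}"
  shows "Delta_s u \<noteq> {}"
proof -
  obtain k0 where "limsup (\<lambda>n. ereal (u n)) < ereal (u k0)"
    using assms unfolding G_gt_def by auto
  then obtain t :: real where t: "limsup (\<lambda>n. ereal (u n)) < ereal t" "t < u k0"
    using ereal_dense2 by fastforce
  then obtain N0 where N0: "\<forall>n\<ge>N0. u n < t"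
    using Limsup_lessD[OF t(1)] by (auto simp: eventually_sequentially)
  define N where "N = max N0 k0"
  have "\<forall>j>N. u j \<le> t" using N0 unfolding N_def by (auto intro: less_imp_le)
  moreover have "t < Max (u ` {0..N})"
  proof -
    have "u k0 \<le> Max (u ` {0..N})" unfolding N_def by (intro Max_ge) auto
    with t(2) show ?thesis by linarith
  qed
  ultimately show ?thesis using last_argmax_in_Delta_s by blast
qed

lemma K_s_eq_Least:
  assumes "Delta_s u \<noteq> {}"
  shows "K_s u = enat (LEAST k. k \<in> Delta_s u)"
  unfolding K_s_def
proof (rule antisym)
  show "(INF k\<in>Delta_s u. enat k) \<le> enat (LEAST k. k \<in> Delta_s u)"
    using assms by (intro INF_lower) (auto intro: LeastI)
  show "enat (LEAST k. k \<in> Delta_s u) \<le> (INF k\<in>Delta_s u. enat k)"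
    by (auto intro!: INF_greatest Least_le)
qed

text \<open>At the least element of \<open>\<Delta>\<^sup>s\<^sub>u\<close> the running maximum is attained: otherwise the last
  argmax before it would be an earlier element.\<close>
lemma Least_Delta_s_record:
  fixes u :: "nat \<Rightarrow> real"
  assumes "Delta_s u \<noteq> {}"
  defines "K \<equiv> LEAST k. k \<in> Delta_s u"
  obtains s where "s < u K" "\<And>k. k \<le> K \<Longrightarrow> u k \<le> u K" "\<And>j. K < j \<Longrightarrow> u j \<le> s"
proof -
  have "K \<in> Delta_s u" unfolding K_def using assms by (auto intro: LeastI)
  then obtain s where s: "s < Max (u ` {0..K})" "\<forall>j>K. u j \<le> s"
    unfolding Delta_s_iff by blast
  then obtain i where i: "i \<le> K" "u i = Max (u ` {0..K})" "i \<in> Delta_s u"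
    using last_argmax_in_Delta_s by blast
  have "K \<le> i" using i(3) unfolding K_def by (rule Least_le)
  then have "u K = Max (u ` {0..K})" using i by simp
  with s show thesis by (intro that[of s]) auto
qed

lemma geometric_majorant_touching:
  fixes u :: "nat \<Rightarrow> real"
  assumes "s < u K" "\<And>k. k \<le> K \<Longrightarrow> u k \<le> u K" "\<And>k. K < k \<Longrightarrow> u k \<le> s"
  defines "a \<equiv> (u K - s) * 2 ^ K"
  shows "a > 0" "u K = a * (1/2) ^ K + s" "u k \<le> a * (1/2) ^ k + s"
proof -
  show a: "a > 0" unfolding a_def using assms(1) by simp
  show eq: "u K = a * (1/2) ^ K + s" unfolding a_def by (simp add: power_one_over)
  show "u k \<le> a * (1/2) ^ k + s"
  proof (cases "k \<le> K")
    case True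
    then have "a * (1/2) ^ K \<le> a * (1/2) ^ k"
      using a by (intro mult_left_mono power_decreasing) auto
    then show ?thesis using assms(2)[OF True] eq by linarith
  next
    case False
    then show ?thesis using assms(3)[of k] a by (simp add: add_increasing)
  qed
qed

theorem mainTheorem3:
  fixes u :: "nat \<Rightarrow> real"
  assumes "u \<in> Lambda" and "G_gt u \<noteq> {}"
  shows "\<exists>a b c :: real. a > 0 \<and> 0 < b \<and> b < 1 \<and>
           {k. u k > c} \<noteq> {} \<and>
           (\<forall>k. u k \<le> a * b ^ k + c) \<and>
           (\<exists>K. K_s u = enat K \<and> u K = a * b ^ K + c)"
proof -
  have ne: "Delta_s u \<noteq> {}" using assms(2) by (rule Delta_s_nonempty)
  define K where "K = (LEAST k. k \<in> Delta_s u)"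
  obtain s where s: "s < u K" "\<And>k. k \<le> K \<Longrightarrow> u k \<le> u K" "\<And>j. K < j \<Longrightarrow> u j \<le> s"
    using Least_Delta_s_record[OF ne] unfolding K_def by blast
  define a where "a = (u K - s) * 2 ^ K"
  note majorant = geometric_majorant_touching[of s u K, OF s, folded a_def]
  have "{k. u k > s} \<noteq> {}" using s(1) by auto
  then show ?thesis
    using majorant K_s_eq_Least[OF ne, folded K_def]
    by (intro exI[of _ a] exI[of _ "1/2"] exI[of _ s]) auto
qed

end
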